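(* The generating function $$F_{(132,321)}(x,p,q,u,v,s,t)=\sum_{n\ge0}\ \sum_{\pi\in S_n(132,321)} x^n p^{\operatorname{asc}(\pi)}q^{\operatorname{des}(\pi)}u^{\operatorname{lrmax}(\pi)}v^{\operatorname{rlmax}(\pi)}s^{\operatorname{lrmin}(\pi)}t^{\operatorname{rlmin}(\pi)}$$ is equal to $\dfrac{A}{(1-ptx)(1-pux)(1-ptux)}$, where $$A=1 + s t u v x + q s^2 t u v^2 x^2 - p^3 t^2 u^2 x^3 + p^2 t u x^2 (1 + t + u + s t u v x) - p x\bigl(u + s t^2 u v x (1 + q s u (-1 + v) x) + t (1 + u + s u^2 v x)\bigr).$$
   Context: For $n\ge 0$, $S_n$ denotes the set of permutations $\pi=\pi_1\cdots\pi_n$ of $[n]=\{1,\dots,n\}$ ($S_0$ consists of the empty permutation, for which all statistics are $0$). $\pi$ avoids a pattern $\tau\in S_k$ if no subsequence $\pi_{i_1}\cdots\pi_{i_k}$ ($i_1<\dots<i_k$) satisfies $\pi_{i_a}<\pi_{i_b}\iff\tau_a<\tau_b$; $S_n(\tau,\rho)$ is the set of permutations in $S_n$ avoiding both $\tau$ and $\rho$. $\operatorname{asc}(\pi)$ (resp. $\operatorname{des}(\pi)$) is the number of $i\in[n-1]$ with $\pi_i<\pi_{i+1}$ (resp. $\pi_i>\pi_{i+1}$). $\pi_i$ is a left-to-right maximum (resp. minimum) if it is larger (resp. smaller) than every $\pi_j$ with $j<i$, and a right-to-left maximum (resp. minimum) if it is larger (resp. smaller) than every $\pi_j$ with $j>i$;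 $\operatorname{lrmax},\operatorname{lrmin},\operatorname{rlmax},\operatorname{rlmin}$ count these. *)

theory Defs
  imports "HOL-Computational_Algebra.Formal_Power_Series"
begin

text \<open>Permutations of [n] as lists (one-line notation); list index i (0-based) is position i+1.\<close>
definition perms :: "nat \<Rightarrow> nat list set" where
  "perms n = {xs. distinct xs \<and> set xs = {1..n}}"

definition contains :: "nat list \<Rightarrow> nat list \<Rightarrow> bool" where
  "contains \<pi> \<tau> \<longleftrightarrow> (\<exists>is. length is = length \<tau> \<and> sorted_wrt (<) is \<and>
      (\<forall>a<length is. is ! a < length \<pi>) \<and>
      (\<forall>a<length \<tau>. \<forall>b<length \<tau>. (\<pi> ! (is ! a) < \<pi> ! (is ! b) \<longleftrightarrow> \<tau> ! a < \<tau> ! b)))"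

definition avoids :: "nat list \<Rightarrow> nat list \<Rightarrow> bool" where
  "avoids \<pi> \<tau> \<longleftrightarrow> \<not> contains \<pi> \<tau>"

definition Av2 :: "nat \<Rightarrow> nat list \<Rightarrow> nat list \<Rightarrow> nat list set" where
  "Av2 n \<tau> \<rho> = {\<pi> \<in> perms n. avoids \<pi> \<tau> \<and> avoids \<pi> \<rho>}"

definition asc :: "nat list \<Rightarrow> nat" where
  "asc \<pi> = card {i. i + 1 < length \<pi> \<and> \<pi> ! i < \<pi> ! (i + 1)}"
definition des :: "nat list \<Rightarrow> nat" where
  "des \<pi> = card {i. i + 1 < length \<pi> \<and> \<pi> ! i > \<pi> ! (i + 1)}"
definition lrmax :: "nat list \<Rightarrow> nat" where
  "lrmax \<pi> = card {i. i < length \<pi> \<and> (\<forall>j<i. \<pi> ! j < \<pi> ! i)}"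
definition lrmin :: "nat list \<Rightarrow> nat" where
  "lrmin \<pi> = card {i. i < length \<pi> \<and> (\<forall>j<i. \<pi> ! j > \<pi> ! i)}"
definition rlmax :: "nat list \<Rightarrow> nat" where
  "rlmax \<pi> = card {i. i < length \<pi> \<and> (\<forall>j. i < j \<and> j < length \<pi> \<longrightarrow> \<pi> ! j < \<pi> ! i)}"
definition rlmin :: "nat list \<Rightarrow> nat" where
  "rlmin \<pi> = card {i. i < length \<pi> \<and> (\<forall>j. i < j \<and> j < length \<pi> \<longrightarrow> \<pi> ! j > \<pi> ! i)}"

text \<open>The generating function, with the variables p,q,u,v,s,t specialised to elements
  of an arbitrary commutative ring, as a formal power series in x.\<close>
definition F132_321 :: "'a::comm_ring_1 \<Rightarrow> 'a \<Rightarrow> 'a \<Rightarrow> 'a \<Rightarrow> 'a \<Rightarrow> 'a \<Rightarrow> 'a fps" where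
  "F132_321 p q u v s t = Abs_fps (\<lambda>n. \<Sum>\<pi>\<in>Av2 n [1,3,2] [3,2,1].
     p ^ asc \<pi> * q ^ des \<pi> * u ^ lrmax \<pi> * v ^ rlmax \<pi> * s ^ lrmin \<pi> * t ^ rlmin \<pi>)"

end

theory Submission
  imports Defs
begin

(* A permutation avoiding 132 and 321 is increasing before its entry 1 (no 321) and after it
   (no 132), and the entries before 1 form an interval (no 132). So it is either the identity or,
   for 1 \<le> i < k \<le> n, the concatenation of the increasing runs k-i+1..k, 1..k-i and k+1..n.
   Each statistic of such a permutation is an affine function of the run lengths i, k-i and n-k,
   except for one extra right-to-left maximum when the last run is empty. Hence the generating
   function is a geometric series (the identities) plus a product of three geometric-type series
   (one per run), and multiplying by their denominators 1-ptx, 1-pux and 1-ptux leaves a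
   polynomial. *)

lemma ex_length_3_conv: "(\<exists>xs. length xs = 3 \<and> P xs) \<longleftrightarrow> (\<exists>x y z. P [x, y, z])"
proof
  show "\<exists>xs. length xs = 3 \<and> P xs" if "\<exists>x y z. P [x, y, z]"
    using that by (metis length_Cons list.size(3) numeral_3_eq_3)
qed (auto simp: numeral_3_eq_3 length_Suc_conv)

lemma all_less_3: "(\<forall>a<(3::nat). P a) \<longleftrightarrow> P 0 \<and> P 1 \<and> P 2"
  by (simp add: numeral_3_eq_3 numeral_2_eq_2 All_less_Suc2)

lemma strict_indices_3_conv:
  fixes x y z m :: nat
  shows "(sorted_wrt (<) [x, y, z] \<and> (\<forall>a<length [x, y, z]. [x, y, z] ! a < m) \<and> R) \<longleftrightarrow>
   (x < y \<and> y < z \<and> z < m \<and> R)"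
  by (auto simp: All_less_Suc)

lemma contains_length_3:
  assumes "length \<tau> = 3"
  shows "contains \<pi> \<tau> \<longleftrightarrow> (\<exists>x y z. x < y \<and> y < z \<and> z < length \<pi> \<and>
     (\<forall>a<3. \<forall>b<3. \<pi> ! ([x,y,z] ! a) < \<pi> ! ([x,y,z] ! b) \<longleftrightarrow> \<tau> ! a < \<tau> ! b))"
  unfolding contains_def assms ex_length_3_conv strict_indices_3_conv ..

lemma contains_132_iff:
  "contains \<pi> [1,3,2] \<longleftrightarrow>
    (\<exists>x y z. x < y \<and> y < z \<and> z < length \<pi> \<and> \<pi>!x < \<pi>!z \<and> \<pi>!z < \<pi>!y)"
proof -
  have "(\<forall>a<3. \<forall>b<3. \<pi> ! ([x,y,z] ! a) < \<pi> ! ([x,y,z] ! b) \<longleftrightarrow> [1::nat,3,2] ! a < [1,3,2] ! b)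
      \<longleftrightarrow> \<pi>!x < \<pi>!z \<and> \<pi>!z < \<pi>!y" for x y z
    by (auto simp: all_less_3)
  then show ?thesis by (simp add: contains_length_3)
qed

lemma contains_321_iff:
  "contains \<pi> [3,2,1] \<longleftrightarrow>
    (\<exists>x y z. x < y \<and> y < z \<and> z < length \<pi> \<and> \<pi>!z < \<pi>!y \<and> \<pi>!y < \<pi>!x)"
proof -
  have "(\<forall>a<3. \<forall>b<3. \<pi> ! ([x,y,z] ! a) < \<pi> ! ([x,y,z] ! b) \<longleftrightarrow> [3::nat,2,1] ! a < [3,2,1] ! b)
      \<longleftrightarrow> \<pi>!z < \<pi>!y \<and> \<pi>!y < \<pi>!x" for x y z
    by (auto simp: all_less_3)
  then show ?thesis by (simp add: contains_length_3)
qed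

definition rotation_entry :: "nat \<Rightarrow> nat \<Rightarrow> nat \<Rightarrow> nat" where
  "rotation_entry k i j = (if j < i then k - i + 1 + j else if j < k then j - i + 1 else j + 1)"

definition rotation_perm :: "nat \<Rightarrow> nat \<Rightarrow> nat \<Rightarrow> nat list" where
  "rotation_perm n k i = map (rotation_entry k i) [0..<n]"

definition rotation_params :: "nat \<Rightarrow> (nat \<times> nat) set" where
  "rotation_params n = {(k, i). 1 \<le> i \<and> i < k \<and> k \<le> n}"

lemma length_rotation_perm [simp]: "length (rotation_perm n k i) = n"
  by (simp add: rotation_perm_def)

lemma nth_rotation_perm: "j < n \<Longrightarrow> rotation_perm n k i ! j = rotation_entry k i j"
  by (simp add: rotation_perm_def)

lemma rotation_perm_eq_append:
  assumes "i \<le> k" "k \<le> n"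
  shows "rotation_perm n k i = [k-i+1..<k+1] @ [1..<k-i+1] @ [k+1..<n+1]"
  using assms
  by (intro nth_equalityI) (auto simp: rotation_perm_def rotation_entry_def nth_append simp del: upt_Suc)

lemma rotation_perm_in_Av2:
  assumes "(k, i) \<in> rotation_params n"
  shows "rotation_perm n k i \<in> Av2 n [1,3,2] [3,2,1]"
proof -
  have a: "1 \<le> i" "i < k" "k \<le> n" using assms by (auto simp: rotation_params_def)
  have blocks: "rotation_perm n k i = [k-i+1..<k+1] @ [1..<k-i+1] @ [k+1..<n+1]"
    using a by (intro rotation_perm_eq_append) auto
  have "distinct (rotation_perm n k i)" "set (rotation_perm n k i) = {1..n}"
    unfolding blocks using a by (auto simp del: upt_Suc)
  moreover have "\<not> contains (rotation_perm n k i) [1,3,2]"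
  proof
    assume "contains (rotation_perm n k i) [1,3,2]"
    then obtain x y z where "x < y" "y < z" "z < n"
      "rotation_entry k i x < rotation_entry k i z" "rotation_entry k i z < rotation_entry k i y"
      unfolding contains_132_iff by (auto simp: nth_rotation_perm)
    then show False using a by (auto simp: rotation_entry_def split: if_splits)
  qed
  moreover have "\<not> contains (rotation_perm n k i) [3,2,1]"
  proof
    assume "contains (rotation_perm n k i) [3,2,1]"
    then obtain x y z where "x < y" "y < z" "z < n"
      "rotation_entry k i z < rotation_entry k i y" "rotation_entry k i y < rotation_entry k i x"
      unfolding contains_321_iff by (auto simp: nth_rotation_perm)
    then show False using a by (auto simp: rotation_entry_def split: if_splits)
  qed
  ultimately show ?thesis unfolding Av2_def perms_def avoids_def by blast
qed

lemma upt_avoids_132_321: "avoids [1..<n+1] [1,3,2]" "avoids [1..<n+1] [3,2,1]"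
  unfolding avoids_def contains_132_iff contains_321_iff by (auto simp del: upt_Suc)

lemma upt_in_Av2: "[1..<n+1] \<in> Av2 n [1,3,2] [3,2,1]"
  using upt_avoids_132_321 by (auto simp: Av2_def perms_def simp del: upt_Suc)

lemma rotation_entry_eq_1_iff:
  assumes "(k, i) \<in> rotation_params n"
  shows "rotation_entry k i j = 1 \<longleftrightarrow> j = i"
  using assms by (auto simp: rotation_params_def rotation_entry_def)

lemma inj_on_rotation_perm: "inj_on (\<lambda>(k, i). rotation_perm n k i) (rotation_params n)"
proof (rule inj_onI, clarify)
  fix k i k' i' assume ki: "(k, i) \<in> rotation_params n" and ki': "(k', i') \<in> rotation_params n"
    and eq: "rotation_perm n k i = rotation_perm n k' i'"
  then have a: "1 \<le> i" "i < k" "k \<le> n" "1 \<le> i'" "i' < k'" "k' \<le> n"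
    by (auto simp: rotation_params_def)
  have entry: "rotation_entry k i j = rotation_entry k' i' j" if "j < n" for j
    using arg_cong[OF eq, of "\<lambda>xs. xs ! j"] that by (simp add: nth_rotation_perm)
  have "i = i'"
    using entry[of i] a rotation_entry_eq_1_iff[OF ki, of i] rotation_entry_eq_1_iff[OF ki', of i]
    by simp
  moreover have "k = k'"
    using entry[of 0] a \<open>i = i'\<close> by (simp add: rotation_entry_def)
  ultimately show "k = k' \<and> i = i'" by simp
qed

lemma upt_notin_rotation_perms: "[1..<n+1] \<notin> (\<lambda>(k, i). rotation_perm n k i) ` rotation_params n"
proof
  assume "[1..<n+1] \<in> (\<lambda>(k, i). rotation_perm n k i) ` rotation_params n"
  then obtain k i where ki: "(k, i) \<in> rotation_params n" and eq: "[1..<n+1] = rotation_perm n k i"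
    by auto
  from ki have "0 < n" "i \<noteq> 0"
    by (auto simp: rotation_params_def)
  then have "rotation_entry k i 0 \<noteq> 1"
    using rotation_entry_eq_1_iff[OF ki] by simp
  moreover have "rotation_entry k i 0 = [1..<n+1] ! 0"
    unfolding eq using \<open>0 < n\<close> by (simp add: nth_rotation_perm)
  moreover have "[1..<n+1] ! 0 = 1"
    using \<open>0 < n\<close> by (simp del: upt_Suc)
  ultimately show False by simp
qed

lemma finite_rotation_params: "finite (rotation_params n)"
  by (rule finite_subset[of _ "{0..n} \<times> {0..n}"]) (auto simp: rotation_params_def)

lemma sorted_before_if_avoids_321:
  assumes "avoids (L @ m # R) [3,2,1]" "distinct L" "\<forall>x\<in>set L. m < x"
  shows "sorted_wrt (<) L"
  unfolding sorted_wrt_iff_nth_less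
proof (intro allI impI)
  fix a b assume ab: "a < b" "b < length L"
  have "\<not> L ! b < L ! a"
  proof
    assume "L ! b < L ! a"
    moreover have "m < L ! b" using assms(3) ab by simp
    ultimately have "contains (L @ m # R) [3,2,1]"
      unfolding contains_321_iff using ab
      by (intro exI[of _ a] exI[of _ b] exI[of _ "length L"]) (simp add: nth_append)
    then show False using assms(1) by (simp add: avoids_def)
  qed
  moreover have "L ! a \<noteq> L ! b" using assms(2) ab by (simp add: nth_eq_iff_index_eq)
  ultimately show "L ! a < L ! b" by simp
qed

lemma sorted_after_if_avoids_132:
  assumes "avoids (L @ m # R) [1,3,2]" "distinct R" "\<forall>x\<in>set R. m < x"
  shows "sorted_wrt (<) R"
  unfolding sorted_wrt_iff_nth_less
proof (intro allI impI)
  fix a b assume ab: "a < b" "b < length R"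
  have "\<not> R ! b < R ! a"
  proof
    assume "R ! b < R ! a"
    moreover have "m < R ! b" using assms(3) ab by simp
    ultimately have "contains (L @ m # R) [1,3,2]"
      unfolding contains_132_iff using ab
      by (intro exI[of _ "length L"] exI[of _ "length L + 1 + a"] exI[of _ "length L + 1 + b"])
         (simp add: nth_append)
    then show False using assms(1) by (simp add: avoids_def)
  qed
  moreover have "R ! a \<noteq> R ! b" using assms(2) ab by (simp add: nth_eq_iff_index_eq)
  ultimately show "R ! a < R ! b" by simp
qed

lemma not_between_if_avoids_132:
  assumes "avoids (L @ R) [1,3,2]" "sorted_wrt (<) L" "x \<in> set L" "y \<in> set L" "z \<in> set R"
  shows "\<not> (x < z \<and> z < y)"
proof
  assume xzy: "x < z \<and> z < y"
  obtain a b c where abc: "a < length L" "x = L ! a" "b < length L" "y = L ! b" "c < length R" "z = R ! c"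
    using assms(3-5) by (metis in_set_conv_nth)
  have "a < b"
  proof (rule ccontr)
    assume "\<not> a < b"
    then have "b = a \<or> b < a" by linarith
    then have "y \<le> x" using sorted_wrt_nth_less[OF assms(2), of b a] abc by auto
    then show False using xzy by simp
  qed
  then have "contains (L @ R) [1,3,2]"
    unfolding contains_132_iff using abc xzy
    by (intro exI[of _ a] exI[of _ b] exI[of _ "length L + c"]) (simp add: nth_append)
  then show False using assms(1) by (simp add: avoids_def)
qed

lemma set_eq_interval_if_avoids_132:
  assumes "avoids (L @ R) [1,3,2]" "sorted_wrt (<) L" "L \<noteq> []"
    and "{Min (set L)..Max (set L)} \<subseteq> set L \<union> set R"
  shows "set L = {Min (set L)..Max (set L)}"
proof
  show "set L \<subseteq> {Min (set L)..Max (set L)}" by (simp add: subset_iff)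
  show "{Min (set L)..Max (set L)} \<subseteq> set L"
  proof
    fix z assume z: "z \<in> {Min (set L)..Max (set L)}"
    have ends: "Min (set L) \<in> set L" "Max (set L) \<in> set L"
      using assms(3) by simp_all
    show "z \<in> set L"
    proof (rule ccontr)
      assume z_notin: "z \<notin> set L"
      then have "z \<noteq> Min (set L)" "z \<noteq> Max (set L)" using ends by auto
      then have "Min (set L) < z \<and> z < Max (set L)" using z by auto
      moreover have "z \<in> set R" using z assms(4) z_notin by blast
      ultimately show False using not_between_if_avoids_132[OF assms(1,2) ends] by blast
    qed
  qed
qed

lemma append_interval_eq_rotation_perm:
  assumes "sorted_wrt (<) L" "sorted_wrt (<) R" "set L = {lo..hi}"
    and "set L \<union> set R = {2..n}" "set L \<inter> set R = {}" "2 \<le> lo" "lo \<le> hi" "hi \<le> n"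
  shows "L @ 1 # R = rotation_perm n hi (hi + 1 - lo)"
proof -
  have L: "L = [lo..<hi+1]"
    using assms(1,3)
    by (intro strict_sorted_equal) (simp_all add: atLeastLessThanSuc_atLeastAtMost del: upt_Suc)
  have R: "R = [2..<lo] @ [hi+1..<n+1]"
  proof (rule strict_sorted_equal[OF _ assms(2)])
    show "sorted_wrt (<) ([2..<lo] @ [hi+1..<n+1])"
      using assms(7) by (simp add: sorted_wrt_append del: upt_Suc)
    have "set R = {2..n} - {lo..hi}"
      using assms(3-5) by blast
    moreover have "{2..<lo} \<union> {hi+1..<n+1} = {2..n} - {lo..hi}"
      using assms(6-8) by auto
    ultimately show "set R = set ([2..<lo] @ [hi+1..<n+1])"
      by (simp del: upt_Suc)
  qed
  show ?thesis
    using assms(6-8)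
    by (simp add: L R rotation_perm_eq_append upt_conv_Cons numeral_2_eq_2 del: upt_Suc)
qed

lemma Av2_132_321_split_at_1:
  assumes "L @ 1 # R \<in> Av2 n [1,3,2] [3,2,1]"
  shows "set L \<union> set R = {2..n}" "set L \<inter> set R = {}" "sorted_wrt (<) L" "sorted_wrt (<) R"
proof -
  have dist: "distinct (L @ 1 # R)" and set_eq: "set (L @ 1 # R) = {1..n}"
    and av132: "avoids (L @ 1 # R) [1,3,2]" and av321: "avoids (L @ 1 # R) [3,2,1]"
    using assms by (simp_all add: Av2_def perms_def)
  have "set L \<union> set R = set (L @ 1 # R) - {1}"
    using dist by auto
  also have "\<dots> = {2..n}"
    unfolding set_eq by auto
  finally show LR: "set L \<union> set R = {2..n}" .
  show "set L \<inter> set R = {}"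
    using dist by auto
  from LR have "set L \<subseteq> {2..n}" "set R \<subseteq> {2..n}"
    by blast+
  then have gt1: "\<forall>x\<in>set L. 1 < x" "\<forall>x\<in>set R. 1 < x"
    by auto
  have "distinct L" "distinct R"
    using dist by simp_all
  then show "sorted_wrt (<) L" "sorted_wrt (<) R"
    using sorted_before_if_avoids_321[OF av321] sorted_after_if_avoids_132[OF av132] gt1 by blast+
qed

lemma Av2_132_321_cases:
  assumes "\<pi> \<in> Av2 n [1,3,2] [3,2,1]"
  obtains "\<pi> = [1..<n+1]" | k i where "(k, i) \<in> rotation_params n" "\<pi> = rotation_perm n k i"
proof (cases "n = 0")
  case True
  then show ?thesis using assms that(1) by (simp add: Av2_def perms_def)
next
  case False
  then have "1 \<in> set \<pi>"
    using assms by (simp add: Av2_def perms_def)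
  then obtain L R where \<pi>: "\<pi> = L @ 1 # R"
    by (meson split_list)
  note LR = Av2_132_321_split_at_1[OF assms[unfolded \<pi>]]
  show ?thesis
  proof (cases "L = []")
    case True
    then have "set R = {2..n}"
      using LR(1) by simp
    then have "sorted_wrt (<) \<pi>"
      using LR(4) unfolding \<pi> True by auto
    then have "\<pi> = [1..<n+1]"
      using assms
      by (intro strict_sorted_equal)
        (simp_all add: Av2_def perms_def atLeastLessThanSuc_atLeastAtMost del: upt_Suc)
    then show ?thesis by (rule that(1))
  next
    case False
    define lo hi where "lo = Min (set L)" and "hi = Max (set L)"
    have "set L \<subseteq> {2..n}"
      using LR(1) by blast
    then have bounds: "2 \<le> lo" "lo \<le> hi" "hi \<le> n"
      using False unfolding lo_def hi_def by (auto simp: Min_le_iff)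
    have "{lo..hi} \<subseteq> set L \<union> set R"
      unfolding LR(1) using bounds by auto
    moreover have "avoids (L @ 1 # R) [1,3,2]"
      using assms unfolding \<pi> by (simp add: Av2_def)
    ultimately have "set L = {lo..hi}"
      using set_eq_interval_if_avoids_132[of L "1 # R"] LR(3) False
      unfolding lo_def hi_def by auto
    then have "\<pi> = rotation_perm n hi (hi + 1 - lo)"
      using append_interval_eq_rotation_perm LR bounds unfolding \<pi> by blast
    moreover have "(hi, hi + 1 - lo) \<in> rotation_params n"
      using bounds by (simp add: rotation_params_def) arith
    ultimately show ?thesis by (rule that(2)[rotated])
  qed
qed

lemma Av2_132_321_eq:
  "Av2 n [1,3,2] [3,2,1] = insert [1..<n+1] ((\<lambda>(k, i). rotation_perm n k i) ` rotation_params n)"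
proof
  show "Av2 n [1,3,2] [3,2,1] \<subseteq> insert [1..<n+1] ((\<lambda>(k, i). rotation_perm n k i) ` rotation_params n)"
  proof
    fix \<pi> assume "\<pi> \<in> Av2 n [1,3,2] [3,2,1]"
    then show "\<pi> \<in> insert [1..<n+1] ((\<lambda>(k, i). rotation_perm n k i) ` rotation_params n)"
      by (cases rule: Av2_132_321_cases) auto
  qed
  show "insert [1..<n+1] ((\<lambda>(k, i). rotation_perm n k i) ` rotation_params n) \<subseteq> Av2 n [1,3,2] [3,2,1]"
    using upt_in_Av2 rotation_perm_in_Av2 by auto
qed

lemma stats_map_upt:
  fixes f :: "nat \<Rightarrow> nat"
  shows "asc (map f [0..<n]) = card {j. j + 1 < n \<and> f j < f (j + 1)}"
    and "des (map f [0..<n]) = card {j. j + 1 < n \<and> f (j + 1) < f j}"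
    and "lrmax (map f [0..<n]) = card {j. j < n \<and> (\<forall>j'<j. f j' < f j)}"
    and "lrmin (map f [0..<n]) = card {j. j < n \<and> (\<forall>j'<j. f j < f j')}"
    and "rlmax (map f [0..<n]) = card {j. j < n \<and> (\<forall>j'. j < j' \<and> j' < n \<longrightarrow> f j' < f j)}"
    and "rlmin (map f [0..<n]) = card {j. j < n \<and> (\<forall>j'. j < j' \<and> j' < n \<longrightarrow> f j < f j')}"
  unfolding asc_def des_def lrmax_def lrmin_def rlmax_def rlmin_def
  by (auto intro!: arg_cong[where f = card])

lemma stats_upt:
  assumes "0 < n"
  shows "asc [1..<n+1] = n - 1" "des [1..<n+1] = 0" "lrmax [1..<n+1] = n"
    "lrmin [1..<n+1] = 1" "rlmax [1..<n+1] = 1" "rlmin [1..<n+1] = n"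
proof -
  have upt: "[1..<n+1] = map Suc [0..<n]"
    using map_add_upt[of 1 n] by simp
  have "{j. j + 1 < n} = {0..<n-1}" "{j. j < n \<and> (\<forall>j'<j. Suc j < Suc j')} = {0}"
    "{j. j < n \<and> (\<forall>j'. j < j' \<and> j' < n \<longrightarrow> Suc j' < Suc j)} = {n-1}"
    using assms by (auto dest: spec[of _ "n - 1"])
  then show "asc [1..<n+1] = n - 1" "des [1..<n+1] = 0" "lrmax [1..<n+1] = n"
    "lrmin [1..<n+1] = 1" "rlmax [1..<n+1] = 1" "rlmin [1..<n+1] = n"
    unfolding upt stats_map_upt by simp_all
qed

context
  fixes n k i :: nat
  assumes params: "(k, i) \<in> rotation_params n"
begin

private abbreviation "f \<equiv> rotation_entry k i"

private lemma bounds: "1 \<le> i" "i < k" "k \<le> n"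
  using params by (auto simp: rotation_params_def)

lemma asc_rotation_perm: "asc (rotation_perm n k i) = n - 2"
proof -
  have "{j. j + 1 < n \<and> f j < f (j + 1)} = {0..<n-1} - {i-1}"
    using bounds by (auto simp: rotation_entry_def)
  then show ?thesis using bounds by (simp add: rotation_perm_def stats_map_upt)
qed

lemma des_rotation_perm: "des (rotation_perm n k i) = 1"
proof -
  have "{j. j + 1 < n \<and> f (j + 1) < f j} = {i-1}"
    using bounds by (auto simp: rotation_entry_def)
  then show ?thesis by (simp add: rotation_perm_def stats_map_upt)
qed

lemma lrmax_rotation_perm: "lrmax (rotation_perm n k i) = i + (n - k)"
proof -
  have "{j. j < n \<and> (\<forall>j'<j. f j' < f j)} = {0..<i} \<union> {k..<n}"
    using bounds by (auto simp: rotation_entry_def dest: spec[of _ 0])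
  then show ?thesis using bounds by (simp add: rotation_perm_def stats_map_upt card_Un_disjoint)
qed

lemma lrmin_rotation_perm: "lrmin (rotation_perm n k i) = 2"
proof -
  have "{j. j < n \<and> (\<forall>j'<j. f j < f j')} = {0, i}" (is "?S = _")
  proof
    show "{0, i} \<subseteq> ?S"
      using bounds by (auto simp: rotation_entry_def)
    show "?S \<subseteq> {0, i}"
    proof
      fix j assume "j \<in> ?S"
      then have j: "j < n" "\<forall>j'<j. f j < f j'" by auto
      show "j \<in> {0, i}"
      proof (rule ccontr)
        assume j0i: "j \<notin> {0, i}"
        show False
        proof (cases "j < i")
          case True
          then have "f j < f 0" using j(2) j0i by simp
          then show False using True bounds by (simp add: rotation_entry_def)
        next
          case False
          then have "f j < f i" using j(2) j0i by simp
          then show False using False bounds by (simp add: rotation_entry_def split: if_splits)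
        qed
      qed
    qed
  qed
  then show ?thesis using bounds by (simp add: rotation_perm_def stats_map_upt)
qed

lemma rlmax_rotation_perm: "rlmax (rotation_perm n k i) = (if k = n then 2 else 1)"
proof -
  have "{j. j < n \<and> (\<forall>j'. j < j' \<and> j' < n \<longrightarrow> f j' < f j)} = (if k = n then {i-1, n-1} else {n-1})"
    using bounds by (auto simp: rotation_entry_def dest: spec[of _ "i - 1"] spec[of _ "n - 1"])
  then show ?thesis using bounds by (simp add: rotation_perm_def stats_map_upt)
qed

lemma rlmin_rotation_perm: "rlmin (rotation_perm n k i) = n - i"
proof -
  have "{j. j < n \<and> (\<forall>j'. j < j' \<and> j' < n \<longrightarrow> f j < f j')} = {i..<n}" (is "?S = _")
  proof
    show "{i..<n} \<subseteq> ?S"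
      using bounds by (auto simp: rotation_entry_def)
    show "?S \<subseteq> {i..<n}"
    proof
      fix j assume "j \<in> ?S"
      then have j: "j < n" "\<forall>j'. j < j' \<and> j' < n \<longrightarrow> f j < f j'" by auto
      show "j \<in> {i..<n}"
      proof (rule ccontr)
        assume "j \<notin> {i..<n}"
        then have "j < i" using j(1) by simp
        moreover from this have "f j < f i" using j(2) bounds by simp
        ultimately show False using bounds by (simp add: rotation_entry_def)
      qed
    qed
  qed
  then show ?thesis by (simp add: rotation_perm_def stats_map_upt)
qed

end

unbundle fps_syntax

definition stat_weight :: "'a::comm_ring_1 \<Rightarrow> 'a \<Rightarrow> 'a \<Rightarrow> 'a \<Rightarrow> 'a \<Rightarrow> 'a \<Rightarrow> nat list \<Rightarrow> 'a" where
  "stat_weight p q u v s t \<pi> =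
     p ^ asc \<pi> * q ^ des \<pi> * u ^ lrmax \<pi> * v ^ rlmax \<pi> * s ^ lrmin \<pi> * t ^ rlmin \<pi>"

definition fps_geometric :: "'a::comm_ring_1 \<Rightarrow> 'a fps" where
  "fps_geometric c = Abs_fps (\<lambda>n. c ^ n)"

lemma fps_geometric_mult_one_minus: "fps_geometric c * (1 - fps_const c * fps_X) = 1"
proof (rule fps_ext)
  fix n
  have "fps_geometric c * (1 - fps_const c * fps_X)
      = fps_geometric c - fps_const c * (fps_X * fps_geometric c)"
    by (simp add: algebra_simps)
  then show "(fps_geometric c * (1 - fps_const c * fps_X)) $ n = (1 :: 'a fps) $ n"
    by (cases n) (simp_all add: fps_geometric_def)
qed

definition identity_gf :: "'a::comm_ring_1 \<Rightarrow> 'a \<Rightarrow> 'a \<Rightarrow> 'a \<Rightarrow> 'a \<Rightarrow> 'a fps" where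
  "identity_gf p u v s t = 1 + fps_const (s*t*u*v) * fps_X * fps_geometric (p*t*u)"

definition block_gf :: "'a::comm_ring_1 \<Rightarrow> 'a \<Rightarrow> 'a fps" where
  "block_gf p c = fps_const c * fps_X * fps_geometric (p*c)"

(* An empty last run leaves k as a second right-to-left maximum: hence v^2 at index 0. *)
definition tail_gf :: "'a::comm_ring_1 \<Rightarrow> 'a \<Rightarrow> 'a \<Rightarrow> 'a \<Rightarrow> 'a \<Rightarrow> 'a \<Rightarrow> 'a fps" where
  "tail_gf p q u v s t = fps_const (q*s^2*v) * (fps_const v + fps_const (p*t*u) * fps_X * fps_geometric (p*t*u))"

lemma identity_gf_nth:
  "identity_gf p u v s t $ m = (if m = 0 then 1 else p^(m-1) * u^m * v * s * t^m)"
  by (cases m) (simp_all add: identity_gf_def fps_geometric_def power_mult_distrib mult_ac)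

lemma block_gf_nth: "block_gf p c $ a = (if a = 0 then 0 else p^(a-1) * c^a)"
  by (cases a) (simp_all add: block_gf_def fps_geometric_def power_mult_distrib mult_ac)

lemma tail_gf_nth:
  "tail_gf p q u v s t $ m = (if m = 0 then q*s^2*v^2 else q*s^2*v*(p*t*u)^m)"
  by (cases m) (simp_all add: tail_gf_def fps_geometric_def power2_eq_square mult_ac)

lemma stat_weight_upt: "stat_weight p q u v s t [1..<n+1] = identity_gf p u v s t $ n"
proof (cases "n = 0")
  case True
  then show ?thesis
    by (simp add: stat_weight_def identity_gf_nth asc_def des_def lrmax_def lrmin_def rlmax_def rlmin_def)
next
  case False
  then show ?thesis
    unfolding stat_weight_def stats_upt[OF False[unfolded neq0_conv]] by (simp add: identity_gf_nth)
qed

lemma stat_weight_rotation_perm: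
  assumes "(k, i) \<in> rotation_params n"
  shows "stat_weight p q u v s t (rotation_perm n k i)
    = block_gf p u $ i * block_gf p t $ (k - i) * tail_gf p q u v s t $ (n - k)"
proof -
  have ki: "1 \<le> i" "i < k" "k \<le> n"
    using assms by (auto simp: rotation_params_def)
  define a b c where "a = i - 1" and "b = k - i - 1" and "c = n - k"
  have abc: "i = a + 1" "k - i = b + 1" "n - k = c"
    using ki by (simp_all add: a_def b_def c_def)
  have stats: "asc (rotation_perm n k i) = a + b + c" "lrmax (rotation_perm n k i) = a + 1 + c"
    "rlmin (rotation_perm n k i) = b + 1 + c" "rlmax (rotation_perm n k i) = (if c = 0 then 2 else 1)"
    using assms abc
    by (auto simp: asc_rotation_perm lrmax_rotation_perm rlmin_rotation_perm rlmax_rotation_perm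
      rotation_params_def)
  have "stat_weight p q u v s t (rotation_perm n k i)
      = p^(a+b+c) * q * u^(a+1+c) * v^(if c = 0 then 2 else 1) * s^2 * t^(b+1+c)"
    unfolding stat_weight_def stats des_rotation_perm[OF assms] lrmin_rotation_perm[OF assms] by simp
  also have "\<dots> = block_gf p u $ i * block_gf p t $ (k - i) * tail_gf p q u v s t $ (n - k)"
    unfolding abc(2,3) unfolding abc(1)
    by (cases "c = 0")
      (simp_all add: block_gf_nth tail_gf_nth power_add power_mult_distrib power2_eq_square mult_ac)
  finally show ?thesis .
qed

lemma fps_mult3_nth:
  fixes f g h :: "'a::semiring_0 fps"
  shows "(f * g * h) $ n = (\<Sum>(k, i) \<in> {(k, i). i \<le> k \<and> k \<le> n}. f $ i * g $ (k - i) * h $ (n - k))"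
proof -
  have "(f * g * h) $ n = (\<Sum>k = 0..n. \<Sum>i = 0..k. f $ i * g $ (k - i) * h $ (n - k))"
    by (simp only: fps_mult_nth sum_distrib_right)
  also have "\<dots> = (\<Sum>(k, i) \<in> (SIGMA k:{0..n}. {0..k}). f $ i * g $ (k - i) * h $ (n - k))"
    by (rule sum.Sigma) auto
  also have "(SIGMA k:{0..n}. {0..k}) = {(k, i). i \<le> k \<and> k \<le> n}"
    by auto
  finally show ?thesis .
qed

lemma F132_321_eq:
  "F132_321 p q u v s t = identity_gf p u v s t + block_gf p u * block_gf p t * tail_gf p q u v s t"
proof (rule fps_ext)
  fix n
  let ?term = "\<lambda>(k, i). block_gf p u $ i * block_gf p t $ (k - i) * tail_gf p q u v s t $ (n - k)"
  have "F132_321 p q u v s t $ n = (\<Sum>\<pi>\<in>Av2 n [1,3,2] [3,2,1]. stat_weight p q u v s t \<pi>)"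
    by (simp add: F132_321_def stat_weight_def)
  also have "\<dots> = stat_weight p q u v s t [1..<n+1]
      + (\<Sum>\<pi>\<in>(\<lambda>(k, i). rotation_perm n k i) ` rotation_params n. stat_weight p q u v s t \<pi>)"
    unfolding Av2_132_321_eq
    by (rule sum.insert[OF finite_imageI[OF finite_rotation_params] upt_notin_rotation_perms])
  also have "\<dots> = identity_gf p u v s t $ n + (\<Sum>ki\<in>rotation_params n. ?term ki)"
    unfolding stat_weight_upt
    by (subst sum.reindex[OF inj_on_rotation_perm])
      (auto intro!: sum.cong simp: stat_weight_rotation_perm)
  also have "(\<Sum>ki\<in>rotation_params n. ?term ki) = (\<Sum>ki\<in>{(k, i). i \<le> k \<and> k \<le> n}. ?term ki)"
  proof (rule sum.mono_neutral_left)
    show "finite {(k, i). i \<le> k \<and> k \<le> n}"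
      by (rule finite_subset[of _ "{0..n} \<times> {0..n}"]) auto
  qed (auto simp: rotation_params_def block_gf_nth split: if_splits)
  finally show "F132_321 p q u v s t $ n
      = (identity_gf p u v s t + block_gf p u * block_gf p t * tail_gf p q u v s t) $ n"
    by (simp add: fps_mult3_nth)
qed

lemma identity_gf_mult: "identity_gf p u v s t * (1 - fps_const (p*t*u) * fps_X)
    = 1 - fps_const (p*t*u) * fps_X + fps_const (s*t*u*v) * fps_X"
  by (simp add: identity_gf_def distrib_right mult.assoc fps_geometric_mult_one_minus)

lemma block_gf_mult: "block_gf p c * (1 - fps_const (p*c) * fps_X) = fps_const c * fps_X"
  by (simp add: block_gf_def mult.assoc fps_geometric_mult_one_minus)

lemma tail_gf_mult: "tail_gf p q u v s t * (1 - fps_const (p*t*u) * fps_X)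
    = fps_const (q*s^2*v) * (fps_const v * (1 - fps_const (p*t*u) * fps_X) + fps_const (p*t*u) * fps_X)"
  by (simp add: tail_gf_def distrib_right mult.assoc fps_geometric_mult_one_minus)

lemma numerator_identity:
  fixes p q u v s t X :: "'a::comm_ring_1"
  shows "(1 - p*t*u*X + s*t*u*v*X) * (1 - p*t*X) * (1 - p*u*X)
      + (u*X) * (t*X) * (q*s^2*v * (v * (1 - p*t*u*X) + p*t*u*X))
    = 1 + s*t*u*v*X + q*s^2*t*u*v^2*X^2 - p^3*t^2*u^2*X^3
      + p^2*t*u*X^2 * (1 + t + u + s*t*u*v*X)
      - p*X * (u + s*t^2*u*v*X * (1 + q*s*u*(v - 1)*X) + t * (1 + u + s*u^2*v*X))"
  by (simp add: algebra_simps power2_eq_square power3_eq_cube)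

theorem theorem5:
  fixes p q u v s t :: "'a::comm_ring_1"
  shows "F132_321 p q u v s t *
      ((1 - fps_const (p*t) * fps_X) * (1 - fps_const (p*u) * fps_X) * (1 - fps_const (p*t*u) * fps_X))
    = 1 + fps_const (s*t*u*v) * fps_X + fps_const (q*s^2*t*u*v^2) * fps_X^2
      - fps_const (p^3*t^2*u^2) * fps_X^3
      + fps_const (p^2*t*u) * fps_X^2 * (1 + fps_const t + fps_const u + fps_const (s*t*u*v) * fps_X)
      - fps_const p * fps_X * (fps_const u
          + fps_const (s*t^2*u*v) * fps_X * (1 + fps_const (q*s*u*(v - 1)) * fps_X)
          + fps_const t * (1 + fps_const u + fps_const (s*u^2*v) * fps_X))"
proof -
  let ?A = "1 - fps_const (p*t) * fps_X" and ?B = "1 - fps_const (p*u) * fps_X"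
    and ?C = "1 - fps_const (p*t*u) * fps_X"
  have "F132_321 p q u v s t * (?A * ?B * ?C)
      = (identity_gf p u v s t * ?C) * ?A * ?B
        + (block_gf p u * ?B) * (block_gf p t * ?A) * (tail_gf p q u v s t * ?C)"
    unfolding F132_321_eq by (simp only: algebra_simps)
  also have "\<dots> = (?C + fps_const (s*t*u*v) * fps_X) * ?A * ?B
      + (fps_const u * fps_X) * (fps_const t * fps_X)
        * (fps_const (q*s^2*v) * (fps_const v * ?C + fps_const (p*t*u) * fps_X))"
    by (simp only: identity_gf_mult block_gf_mult tail_gf_mult)
  \<comment> \<open>Splitting each fps_const of a product into factors turns this into numerator_identity.\<close>
  finally show ?thesis
    unfolding fps_const_mult[symmetric] fps_const_power[symmetric] fps_const_sub[symmetric] fps_const_1_eq_1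
    by (rule trans[OF _ numerator_identity])
qed

end
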